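(* Let $\mathbb{F}$ be a field, $d\geq3$ and $V$ a vector space over $\mathbb{F}$ of dimension $d+1$. Let $E^*_0,\dots,E^*_d$ be a system of mutually orthogonal idempotents in $\mathrm{End}(V)$ and $A\in\mathrm{End}(V)$ with $E^*_iAE^*_j=0$ if $|i-j|>1$ and $E^*_iAE^*_j\neq0$ if $|i-j|=1$. Assume $A$ is multiplicity-free and bipartite with primitive idempotents $E_0,\dots,E_d$ and eigenvalues $\theta_0,\dots,\theta_d$. Let $\theta^*_0,\dots,\theta^*_d\in\mathbb{F}$ be mutually distinct and $A^*=\sum_i\theta^*_iE^*_i$. Assume $E_0$ is normalizing, $(E_0,E_1)$ is a tail, and $E_2$ is the vertex of $\Delta$ other than $E_0$ adjacent to $E_1$. Then $\theta_1(\theta^*_{d-1}-\theta^*_3)=\theta_2(\theta^*_d-\theta^*_2)$.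
   Context: A system of mutually orthogonal idempotents: $E^*_iE^*_j=\delta_{ij}E^*_i$, $\operatorname{rank}E^*_i=1$. $A$ multiplicity-free: $d+1$ distinct eigenvalues in $\mathbb{F}$; $E_i$ is the projection onto the $\theta_i$-eigenspace along the other eigenspaces. Bipartite: $\operatorname{tr}(E^*_iA)=0$ for all $i$. $\Delta$: graph on $E_0,\dots,E_d$ with $E_i\neq E_j$ adjacent iff $E_iA^*E_j\neq0$. $(E_0,E_1)$ is a tail if $E_0$ is adjacent to no vertex other than $E_1$ and $E_1$ is adjacent to at most one vertex other than $E_0$. The matrix $Y$ representing $A$ w.r.t. a basis $v_0,\dots,v_d$ satisfies $Av_j=\sum_iY_{ij}v_i$. An eigenvalue $\theta$ of $A$ is normalizing if some basis with $v_i\in E^*_iV$ makes every row sum of the matrix representing $A$ equal to $\theta$; $E_i$ is normalizing if $\theta_i$ is. *)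

theory Defs
  imports "Jordan_Normal_Form.DL_Rank" "Jordan_Normal_Form.Char_Poly"
begin

text \<open>Matrices over a field F represent End(V), V = F^n with n = d+1.\<close>

definition mtrace :: "'a::comm_ring_1 mat \<Rightarrow> 'a" where
  "mtrace M = (\<Sum>i<dim_row M. M $$ (i,i))"

definition orth_idempotents :: "nat \<Rightarrow> (nat \<Rightarrow> 'a::field mat) \<Rightarrow> bool" where
  "orth_idempotents d Es \<longleftrightarrow>
     (\<forall>i\<le>d. Es i \<in> carrier_mat (d+1) (d+1) \<and> vec_space.rank (d+1) (Es i) = 1) \<and>
     (\<forall>i\<le>d. \<forall>j\<le>d. Es i * Es j = (if i = j then Es i else 0\<^sub>m (d+1) (d+1)))"

definition primitive_idempotents ::
  "nat \<Rightarrow> 'a::field mat \<Rightarrow> (nat \<Rightarrow> 'a) \<Rightarrow> (nat \<Rightarrow> 'a mat) \<Rightarrow> bool" where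
  "primitive_idempotents d A th E \<longleftrightarrow>
     inj_on th {..d} \<and> (\<forall>i\<le>d. eigenvalue A (th i)) \<and>
     (\<forall>i\<le>d. E i \<in> carrier_mat (d+1) (d+1) \<and>
        (\<forall>j\<le>d. \<forall>v\<in>carrier_vec (d+1). A *\<^sub>v v = th j \<cdot>\<^sub>v v \<longrightarrow>
             E i *\<^sub>v v = (if i = j then v else 0\<^sub>v (d+1))))"

definition bipartite :: "nat \<Rightarrow> (nat \<Rightarrow> 'a::field mat) \<Rightarrow> 'a mat \<Rightarrow> bool" where
  "bipartite d Es A \<longleftrightarrow> (\<forall>i\<le>d. mtrace (Es i * A) = 0)"

text \<open>An eigenvalue theta is normalizing: there is a basis v_0..v_d (the columns of an
  invertible matrix P) with v_i in Es i V such that the matrix Y representing A w.r.t. this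
  basis (A v_j = sum_i Y_ij v_i, i.e. A P = P Y) has all row sums equal to theta.\<close>
definition normalizing :: "nat \<Rightarrow> (nat \<Rightarrow> 'a::field mat) \<Rightarrow> 'a mat \<Rightarrow> 'a \<Rightarrow> bool" where
  "normalizing d Es A \<theta> \<longleftrightarrow>
     (\<exists>P Y. P \<in> carrier_mat (d+1) (d+1) \<and> Y \<in> carrier_mat (d+1) (d+1) \<and> det P \<noteq> 0 \<and>
        (\<forall>i\<le>d. Es i *\<^sub>v col P i = col P i) \<and> A * P = P * Y \<and>
        (\<forall>i\<le>d. (\<Sum>j\<le>d. Y $$ (i,j)) = \<theta>))"

definition dual_op :: "nat \<Rightarrow> (nat \<Rightarrow> 'a::field) \<Rightarrow> (nat \<Rightarrow> 'a mat) \<Rightarrow> 'a mat" where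
  "dual_op d ths Es = mat (d+1) (d+1) (\<lambda>(k,l). \<Sum>i\<le>d. ths i * Es i $$ (k,l))"

definition Delta_adj :: "nat \<Rightarrow> (nat \<Rightarrow> 'a::field mat) \<Rightarrow> 'a mat \<Rightarrow> nat \<Rightarrow> nat \<Rightarrow> bool" where
  "Delta_adj d E As i j \<longleftrightarrow> i \<le> d \<and> j \<le> d \<and> E i \<noteq> E j \<and> E i * As * E j \<noteq> 0\<^sub>m (d+1) (d+1)"

definition is_tail :: "nat \<Rightarrow> (nat \<Rightarrow> 'a::field mat) \<Rightarrow> 'a mat \<Rightarrow> nat \<Rightarrow> nat \<Rightarrow> bool" where
  "is_tail d E As a b \<longleftrightarrow>
     (\<forall>j\<le>d. Delta_adj d E As a j \<longrightarrow> E j = E b) \<and>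
     (\<forall>j\<le>d. \<forall>k\<le>d. Delta_adj d E As b j \<and> E j \<noteq> E a \<and> Delta_adj d E As b k \<and> E k \<noteq> E a
        \<longrightarrow> E j = E k)"

end

theory Submission
  imports Defs
begin

text \<open>
  In the normalizing basis \<open>v\<^sub>0, \<dots>, v\<^sub>d\<close> the matrix \<open>Y\<close> of \<open>A\<close> is tridiagonal with zero diagonal
  (bipartiteness) and constant row sums \<open>\<theta>\<^sub>0\<close>, while \<open>A\<^sup>*\<close> is diagonal. The rows \<open>r\<^sub>j\<close> of the
  change of basis to an eigenbasis of \<open>A\<close> are left eigenvectors of \<open>Y\<close>; the row \<open>r\<^sub>0\<close> for
  \<open>\<theta>\<^sub>0\<close> satisfies detailed balance, so \<open>r\<^sub>j / r\<^sub>0\<close> is a right eigenvector of \<open>Y\<close>.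
  The tail condition says that \<open>\<theta>\<^sup>*\<^sub>i r\<^sub>0\<^sub>i\<close> is a combination of \<open>r\<^sub>0\<^sub>i, r\<^sub>1\<^sub>i\<close> and
  \<open>\<theta>\<^sup>*\<^sub>i r\<^sub>1\<^sub>i\<close> one of \<open>r\<^sub>0\<^sub>i, r\<^sub>1\<^sub>i, r\<^sub>2\<^sub>i\<close>, so \<open>r\<^sub>1 / r\<^sub>0\<close> and \<open>r\<^sub>2 / r\<^sub>0\<close> are
  polynomials of degree one and two in \<open>\<theta>\<^sup>*\<^sub>i\<close>. Comparing the right eigenvector equations of
  rows \<open>0\<close>, \<open>2\<close> and \<open>d\<close> for these two vectors yields the identity.
\<close>

lemma quadratic_factor_by_roots:
  fixes G B C x r1 r2 :: "'a::field"
  assumes "G*r1^2 + B*r1 + C = 0" "G*r2^2 + B*r2 + C = 0" "r1 \<noteq> r2"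
  shows "G*x^2 + B*x + C = G*(x-r1)*(x-r2)"
proof -
  have "(B + G*(r1+r2)) * (r1 - r2) = (G*r1^2 + B*r1 + C) - (G*r2^2 + B*r2 + C)"
    by (simp add: algebra_simps power2_eq_square)
  with assms have "B + G*(r1+r2) = 0" by simp
  then have B: "B = - G*(r1+r2)" by (simp add: eq_neg_iff_add_eq_0)
  with assms(1) have C: "C = G * r1 * r2"
    by (simp add: algebra_simps power2_eq_square eq_neg_iff_add_eq_0)
  show ?thesis unfolding B C by (simp add: algebra_simps power2_eq_square)
qed

text \<open>
  The hypotheses say that \<open>s\<close> and \<open>z = p s\<^sup>2 + q s + r\<close> satisfy the eigenvector equations of
  rows \<open>0\<close>, \<open>2\<close> and \<open>d\<close> of a tridiagonal matrix with row sums \<open>k\<close>, for the eigenvalues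
  \<open>th\<close> and \<open>et\<close>.
  Eliminating \<open>s\<^sub>1\<close> and \<open>s\<^sub>d\<^sub>-\<^sub>1\<close> makes \<open>s\<^sub>0\<close> and \<open>s\<^sub>d\<close> the two roots of one quadratic, which
  then also governs \<open>s\<^sub>2\<close>.\<close>
lemma quadratic_eigenvector_identity:
  fixes k th et c b p q r s0 s1 s2 s3 sdm sd :: "'a::field"
  assumes k: "k \<noteq> 0" and p: "p \<noteq> 0" and s02: "s0 \<noteq> s2" and s0d: "s0 \<noteq> sd"
    and S0: "k*s1 = th*s0" and S2: "c*s1 + b*s3 = th*s2" and cb: "c + b = k"
    and Sd: "k*sdm = th*sd"
    and Z0: "k*(p*s1^2+q*s1+r) = et*(p*s0^2+q*s0+r)"
    and Z2: "c*(p*s1^2+q*s1+r) + b*(p*s3^2+q*s3+r) = et*(p*s2^2+q*s2+r)"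
    and Zd: "k*(p*sdm^2+q*sdm+r) = et*(p*sd^2+q*sd+r)"
  shows "th*(sdm - s3) = et*(sd - s2)"
proof -
  define G where "G = p*(th^2 - k*et)"
  define B where "B = k*q*(th-et)"
  define C where "C = k*r*(k-et)"
  have root: "G*x^2 + B*x + C = 0" if "k*y = th*x" "k*(p*y^2+q*y+r) = et*(p*x^2+q*x+r)" for x y
  proof -
    have "G*x^2 + B*x + C = p*(k*y)^2 + k*q*(k*y) + k*k*r - k*et*(p*x^2+q*x+r)"
      unfolding G_def B_def C_def that(1) by (simp add: algebra_simps power2_eq_square)
    also have "\<dots> = k*(k*(p*y^2+q*y+r) - et*(p*x^2+q*x+r))"
      by (simp add: algebra_simps power2_eq_square)
    finally show ?thesis using that(2) by simp
  qed
  have "c*s1^2 + b*s3^2 = (s1+s3)*(c*s1+b*s3) - s1*s3*(c+b)"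
    by (simp add: algebra_simps power2_eq_square)
  also have "\<dots> = (s1+s3)*th*s2 - k*s1*s3" by (simp add: S2 cb)
  finally have sq: "c*s1^2 + b*s3^2 = (s1+s3)*th*s2 - k*s1*s3" .
  have "et*(p*s2^2+q*s2+r) = p*(c*s1^2 + b*s3^2) + q*(c*s1+b*s3) + r*(c+b)"
    using Z2 by (simp add: algebra_simps)
  also have "\<dots> = p*((s1+s3)*th*s2 - k*s1*s3) + q*(th*s2) + r*k" by (simp only: sq S2 cb)
  finally have "k*(p*((s1+s3)*th*s2 - k*s1*s3) + q*(th*s2) + r*k - et*(p*s2^2+q*s2+r)) = 0"
    by simp
  then have "p*(k*s1 - th*s2)*(k*s3 - th*s2) = G*s2^2 + B*s2 + C"
    unfolding G_def B_def C_def by (simp add: algebra_simps power2_eq_square)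
  also have "\<dots> = G*(s2-s0)*(s2-sd)"
    by (rule quadratic_factor_by_roots[OF root[OF S0 Z0] root[OF Sd Zd] s0d])
  finally have "(p*(s0-s2))*(th*(k*s3 - th*s2)) = (p*(s0-s2))*((th^2 - k*et)*(sd-s2))"
    unfolding G_def S0 by (simp add: algebra_simps)
  then have "th*(k*s3 - th*s2) = (th^2 - k*et)*(sd-s2)" using p s02 by simp
  then have "k*(th*(sdm - s3)) = k*(et*(sd - s2))"
    using Sd by (simp add: algebra_simps power2_eq_square)
  then show ?thesis using k by simp
qed

section \<open>Tridiagonal matrices with constant row sums\<close>

lemma sum_atMost_two_support:
  fixes g :: "nat \<Rightarrow> 'a::comm_monoid_add"
  assumes "a \<le> d" "b \<le> d" "a \<noteq> b" "\<And>l. l \<le> d \<Longrightarrow> l \<noteq> a \<Longrightarrow> l \<noteq> b \<Longrightarrow> g l = 0"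
  shows "(\<Sum>l\<le>d. g l) = g a + g b"
proof -
  have "(\<Sum>l\<le>d. g l) = (\<Sum>l\<in>{a,b}. g l)"
    by (rule sum.mono_neutral_right) (use assms in auto)
  with assms(3) show ?thesis by simp
qed

lemma sum_atMost_one_support:
  fixes g :: "nat \<Rightarrow> 'a::comm_monoid_add"
  assumes "a \<le> d" "\<And>l. l \<le> d \<Longrightarrow> l \<noteq> a \<Longrightarrow> g l = 0"
  shows "(\<Sum>l\<le>d. g l) = g a"
proof -
  have "(\<Sum>l\<le>d. g l) = (\<Sum>l\<in>{a}. g l)"
    by (rule sum.mono_neutral_right) (use assms in auto)
  then show ?thesis by simp
qed

locale normalized_tridiagonal =
  fixes d :: nat and Y :: "nat \<Rightarrow> nat \<Rightarrow> 'a::field" and k :: 'a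
  assumes d_pos: "1 \<le> d"
    and off_band_zero: "\<And>i j. i \<le> d \<Longrightarrow> j \<le> d \<Longrightarrow> j \<noteq> i+1 \<Longrightarrow> i \<noteq> j+1 \<Longrightarrow> Y i j = 0"
    and band_nonzero: "\<And>i. i < d \<Longrightarrow> Y i (Suc i) \<noteq> 0 \<and> Y (Suc i) i \<noteq> 0"
    and row_sum: "\<And>i. i \<le> d \<Longrightarrow> (\<Sum>j\<le>d. Y i j) = k"
begin

lemma row_expand_first: "(\<Sum>l\<le>d. Y 0 l * g l) = Y 0 1 * g 1"
  by (rule sum_atMost_one_support) (use off_band_zero d_pos in auto)

lemma row_expand_last: "(\<Sum>l\<le>d. Y d l * g l) = Y d (d-1) * g (d-1)"
  by (rule sum_atMost_one_support) (use off_band_zero d_pos in auto)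

lemma row_expand_inner:
  "0 < m \<Longrightarrow> m < d \<Longrightarrow> (\<Sum>l\<le>d. Y m l * g l) = Y m (m-1) * g (m-1) + Y m (m+1) * g (m+1)"
  by (rule sum_atMost_two_support) (use off_band_zero in auto)

lemma col_expand_first: "(\<Sum>l\<le>d. g l * Y l 0) = g 1 * Y 1 0"
  by (rule sum_atMost_one_support) (use off_band_zero d_pos in auto)

lemma col_expand_inner:
  "0 < m \<Longrightarrow> m < d \<Longrightarrow> (\<Sum>l\<le>d. g l * Y l m) = g (m-1) * Y (m-1) m + g (m+1) * Y (m+1) m"
  by (rule sum_atMost_two_support) (use off_band_zero in auto)

lemma row_sum_first: "Y 0 1 = k"
  using row_sum[of 0] row_expand_first[of "\<lambda>_. 1"] by simp

lemma row_sum_last: "Y d (d-1) = k"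
  using row_sum[of d] row_expand_last[of "\<lambda>_. 1"] by simp

lemma row_sum_inner: "0 < m \<Longrightarrow> m < d \<Longrightarrow> Y m (m-1) + Y m (m+1) = k"
  using row_sum[of m] row_expand_inner[of m "\<lambda>_. 1"] by simp

lemma row_sum_nonzero: "k \<noteq> 0"
  using row_sum_first band_nonzero[of 0] d_pos by auto

end

text \<open>A left eigenvector for the row sum plays the role of a stationary distribution.\<close>
locale tridiagonal_stationary = normalized_tridiagonal +
  fixes r0 :: "nat \<Rightarrow> 'a::field"
  assumes stationary: "\<And>m. m \<le> d \<Longrightarrow> (\<Sum>l\<le>d. r0 l * Y l m) = k * r0 m"
    and stationary_nonzero: "\<exists>m\<le>d. r0 m \<noteq> 0"
begin

lemma balance: "m < d \<Longrightarrow> r0 (Suc m) * Y (Suc m) m = r0 m * Y m (Suc m)"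
proof (induction m)
  case 0
  then show ?case using stationary[of 0] col_expand_first[of r0] row_sum_first by simp
next
  case (Suc m)
  have "r0 m * Y m (Suc m) + r0 (Suc (Suc m)) * Y (Suc (Suc m)) (Suc m) = k * r0 (Suc m)"
    using stationary[of "Suc m"] col_expand_inner[of "Suc m" r0] Suc.prems by simp
  then have col: "r0 (Suc (Suc m)) * Y (Suc (Suc m)) (Suc m) = k * r0 (Suc m) - r0 m * Y m (Suc m)"
    by (simp add: algebra_simps)
  have row: "Y (Suc m) (Suc (Suc m)) = k - Y (Suc m) m"
    using row_sum_inner[of "Suc m"] Suc.prems by (simp add: algebra_simps)
  show ?case unfolding col row using Suc by (simp add: algebra_simps)
qed

lemma detailed_balance: "l \<le> d \<Longrightarrow> m \<le> d \<Longrightarrow> r0 l * Y l m = r0 m * Y m l"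
  using balance[of l] balance[of m] off_band_zero[of l m] off_band_zero[of m l]
  by (cases "l = m + 1 \<or> m = l + 1") auto

lemma stationary_nonzero_everywhere: "m \<le> d \<Longrightarrow> r0 m \<noteq> 0"
proof -
  have "r0 m = 0 \<longleftrightarrow> r0 0 = 0" if "m \<le> d" for m
    using that proof (induction m)
    case (Suc m)
    then show ?case using balance[of m] band_nonzero[of m] by auto
  qed simp
  then show "m \<le> d \<Longrightarrow> r0 m \<noteq> 0" using stationary_nonzero by blast
qed

text \<open>By detailed balance, dividing a left eigenvector by \<open>r0\<close> gives a right eigenvector.\<close>
lemma right_eigenvector_of_weighted_left:
  assumes left: "\<And>m. m \<le> d \<Longrightarrow> (\<Sum>l\<le>d. r0 l * f l * Y l m) = lam * (r0 m * f m)"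
    and m: "m \<le> d"
  shows "(\<Sum>l\<le>d. Y m l * f l) = lam * f m"
proof -
  have "r0 m * (\<Sum>l\<le>d. Y m l * f l) = (\<Sum>l\<le>d. r0 l * f l * Y l m)"
    by (simp add: sum_distrib_left detailed_balance[OF _ m] ac_simps)
  also have "\<dots> = r0 m * (lam * f m)" using left[OF m] by (simp add: ac_simps)
  finally show ?thesis using stationary_nonzero_everywhere[OF m] by simp
qed

text \<open>By \<open>dual0\<close> and \<open>dual1\<close>, \<open>r1 / r0\<close> and \<open>r2 / r0\<close> are polynomials of degree one and two
  in \<open>t\<close>.\<close>
lemma tail_identity:
  assumes d3: "3 \<le> d"
    and left1: "\<And>m. m \<le> d \<Longrightarrow> (\<Sum>l\<le>d. r1 l * Y l m) = th1 * r1 m"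
    and left2: "\<And>m. m \<le> d \<Longrightarrow> (\<Sum>l\<le>d. r2 l * Y l m) = th2 * r2 m"
    and dual0: "\<And>m. m \<le> d \<Longrightarrow> r0 m * t m = b00 * r0 m + b01 * r1 m"
    and dual1: "\<And>m. m \<le> d \<Longrightarrow> r1 m * t m = b10 * r0 m + b11 * r1 m + b12 * r2 m"
    and inj: "inj_on t {..d}"
  shows "th1 * (t (d-1) - t 3) = th2 * (t d - t 2)"
proof -
  have t_ne: "t i \<noteq> t j" if "i \<le> d" "j \<le> d" "i \<noteq> j" for i j
    using inj that unfolding inj_on_def by auto
  have b01: "b01 \<noteq> 0"
  proof
    assume "b01 = 0"
    then have "t m = b00" if "m \<le> d" for m
      using dual0[OF that] stationary_nonzero_everywhere[OF that] by simp
    then show False using t_ne[of 0 1] d3 by simp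
  qed
  define s where "s m = (t m - b00) / b01" for m
  have t_s: "t m = b00 + b01 * s m" for m unfolding s_def using b01 by simp
  define z where "z m = b01 * (s m)^2 + (b00 - b11) * s m - b10" for m
  have r1_s: "r1 m = r0 m * s m" if "m \<le> d" for m
    using dual0[OF that] b01 unfolding s_def by (simp add: field_simps)
  have r2_z: "b12 * r2 m = r0 m * z m" if "m \<le> d" for m
    using dual1[OF that] r1_s[OF that] t_s[of m] unfolding z_def
    by (simp add: algebra_simps power2_eq_square)
  have "(\<Sum>l\<le>d. r0 l * s l * Y l m) = th1 * (r0 m * s m)" if "m \<le> d" for m
  proof -
    have "(\<Sum>l\<le>d. r0 l * s l * Y l m) = (\<Sum>l\<le>d. r1 l * Y l m)"
      by (rule sum.cong) (simp_all add: r1_s)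
    then show ?thesis using left1[OF that] r1_s[OF that] by simp
  qed
  then have right_s: "(\<Sum>l\<le>d. Y m l * s l) = th1 * s m" if "m \<le> d" for m
    by (rule right_eigenvector_of_weighted_left[OF _ that])
  have "(\<Sum>l\<le>d. r0 l * z l * Y l m) = th2 * (r0 m * z m)" if "m \<le> d" for m
  proof -
    have "(\<Sum>l\<le>d. r0 l * z l * Y l m) = (\<Sum>l\<le>d. b12 * (r2 l * Y l m))"
      by (rule sum.cong) (simp_all add: r2_z)
    also have "\<dots> = b12 * (\<Sum>l\<le>d. r2 l * Y l m)" by (simp add: sum_distrib_left)
    finally have "(\<Sum>l\<le>d. r0 l * z l * Y l m) = b12 * (\<Sum>l\<le>d. r2 l * Y l m)" .
    then show ?thesis using left2[OF that] r2_z[OF that] by (simp add: ac_simps)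
  qed
  then have right_z: "(\<Sum>l\<le>d. Y m l * z l) = th2 * z m" if "m \<le> d" for m
    by (rule right_eigenvector_of_weighted_left[OF _ that])
  have rows: "k * f 1 = lam * f 0" "Y 2 1 * f 1 + Y 2 3 * f 3 = lam * f 2"
      "k * f (d-1) = lam * f d"
    if "\<And>m. m \<le> d \<Longrightarrow> (\<Sum>l\<le>d. Y m l * f l) = lam * f m" for f lam
    using that[of 0] that[of 2] that[of d] d3 row_expand_first[of f] row_expand_inner[of 2 f]
      row_expand_last[of f] row_sum_first row_sum_last by simp_all
  have "th1 * (s (d-1) - s 3) = th2 * (s d - s 2)"
  proof (rule quadratic_eigenvector_identity[OF row_sum_nonzero b01,
        where q = "b00 - b11" and r = "- b10"])
    show "s 0 \<noteq> s 2" "s 0 \<noteq> s d" using t_ne[of 0 2] t_ne[of 0 d] t_s d3 by force+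
    show "Y 2 1 + Y 2 3 = k" using row_sum_inner[of 2] d3 by simp
  qed (use rows[OF right_s] rows[OF right_z] in \<open>simp_all add: z_def\<close>)
  then have "b01 * (th1 * (s (d-1) - s 3)) = b01 * (th2 * (s d - s 2))" by simp
  then show ?thesis unfolding t_s by (simp add: algebra_simps)
qed

end

lemma mat_mult_entry:
  assumes "X \<in> carrier_mat n m" "Z \<in> carrier_mat m p" "i < n" "j < p"
  shows "(X * Z) $$ (i,j) = (\<Sum>l<m. X $$ (i,l) * Z $$ (l,j))"
  using assms by (simp add: scalar_prod_def atLeast0LessThan)

lemma mat_mult_vec_entry:
  assumes "X \<in> carrier_mat n m" "v \<in> carrier_vec m" "i < n"
  shows "(X *\<^sub>v v) $ i = (\<Sum>l<m. X $$ (i,l) * v $ l)"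
  using assms by (simp add: scalar_prod_def atLeast0LessThan)

lemma obtain_inverse_mat:
  assumes "X \<in> carrier_mat n n" "det X \<noteq> (0::'a::field)"
  obtains Xi where "Xi \<in> carrier_mat n n" "X * Xi = 1\<^sub>m n" "Xi * X = 1\<^sub>m n"
proof -
  have "X \<in> Units (ring_mat TYPE('a) n ())" by (rule det_non_zero_imp_unit[OF assms])
  then show ?thesis using that unfolding Units_def ring_mat_def by auto
qed

lemma mult_intertwining:
  assumes B: "B \<in> carrier_mat n n" and W: "W \<in> carrier_mat n n" and X: "X \<in> carrier_mat n n"
    and P: "P \<in> carrier_mat n n" and C: "C \<in> carrier_mat n n"
    and BW: "B * W = W * X" and XP: "X * P = P * C"
  shows "B * (W * P) = (W * P) * C"
proof -
  have "B * (W * P) = (W * X) * P" using assoc_mult_mat[OF B W P] BW by simp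
  also have "\<dots> = W * (P * C)" using assoc_mult_mat[OF W X P] XP by simp
  also have "\<dots> = (W * P) * C" using assoc_mult_mat[OF W P C] by simp
  finally show ?thesis .
qed

lemma left_inverse_col_row_nonzero:
  assumes "U \<in> carrier_mat n n" "V \<in> carrier_mat n n" "V * U = 1\<^sub>m n" "i < n"
  shows "\<exists>a<n. U $$ (a,i) \<noteq> (0::'a::field)" "\<exists>b<n. V $$ (i,b) \<noteq> 0"
proof -
  have sum: "(\<Sum>l<n. V $$ (i,l) * U $$ (l,i)) = 1"
    using assms mat_mult_entry[OF assms(2,1) assms(4) assms(4)] by simp
  show "\<exists>a<n. U $$ (a,i) \<noteq> 0" "\<exists>b<n. V $$ (i,b) \<noteq> 0"
    by (rule ccontr, use sum in \<open>simp add: sum.neutral\<close>)+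
qed

lemma basis_projection_entry:
  assumes X: "X \<in> carrier_mat n n" and U: "U \<in> carrier_mat n n" and V: "V \<in> carrier_mat n n"
    and UV: "U * V = 1\<^sub>m n" and i: "i < n"
    and col: "\<And>j. j < n \<Longrightarrow> X *\<^sub>v col U j = (if j = i then col U i else 0\<^sub>v n)"
    and a: "a < n" and b: "b < n"
  shows "X $$ (a,b) = U $$ (a,i) * (V $$ (i,b) :: 'a::field)"
proof -
  have XU: "(X * U) $$ (a,j) = (if j = i then U $$ (a,i) else 0)" if j: "j < n" for j
  proof -
    have "(X * U) $$ (a,j) = (X *\<^sub>v col U j) $ a" using X U a j by simp
    then show ?thesis using col[OF j] a i U by auto
  qed
  have "X = (X * U) * V" using X U V UV by simp
  then have "X $$ (a,b) = (\<Sum>l<n. (X * U) $$ (a,l) * V $$ (l,b))"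
    using mat_mult_entry[of "X * U" n n V n a b] X U V a b by simp
  also have "\<dots> = (\<Sum>l<n. (if l = i then U $$ (a,i) * V $$ (i,b) else 0))"
    by (rule sum.cong) (auto simp: XU)
  finally show ?thesis using i by simp
qed

lemma rank_one_sandwich_entry:
  assumes X: "X \<in> carrier_mat n n" and Z: "Z \<in> carrier_mat n n" and C: "C \<in> carrier_mat n n"
    and U: "U \<in> carrier_mat n n" and V: "V \<in> carrier_mat n n"
    and Xe: "\<And>a b. a < n \<Longrightarrow> b < n \<Longrightarrow> X $$ (a,b) = U $$ (a,i) * V $$ (i,b)"
    and Ze: "\<And>a b. a < n \<Longrightarrow> b < n \<Longrightarrow> Z $$ (a,b) = U $$ (a,j) * V $$ (j,b)"
    and i: "i < n" and j: "j < n" and a: "a < n" and b: "b < n"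
  shows "(X * C * Z) $$ (a,b) = U $$ (a,i) * (V * C * U) $$ (i,j) * (V $$ (j,b) :: 'a::field)"
proof -
  have XC: "X * C \<in> carrier_mat n n" using X C by simp
  have "(X * C * Z) $$ (a,b) = (\<Sum>l<n. (X * C) $$ (a,l) * Z $$ (l,b))"
    by (rule mat_mult_entry[OF XC Z a b])
  also have "\<dots> = (\<Sum>l<n. (\<Sum>m<n. U $$ (a,i) * V $$ (i,m) * C $$ (m,l)) * (U $$ (l,j) * V $$ (j,b)))"
    by (rule sum.cong) (auto simp: mat_mult_entry[OF X C a] Xe Ze a b)
  also have "\<dots> = U $$ (a,i) * (\<Sum>l<n. (\<Sum>m<n. V $$ (i,m) * C $$ (m,l)) * U $$ (l,j)) * V $$ (j,b)"
    by (simp add: sum_distrib_left sum_distrib_right ac_simps)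
  also have "(\<Sum>l<n. (\<Sum>m<n. V $$ (i,m) * C $$ (m,l)) * U $$ (l,j)) = (V * C * U) $$ (i,j)"
    using V C by (simp add: mat_mult_entry[OF _ U i j] mat_mult_entry[OF V C i])
  finally show ?thesis .
qed

lemma rank_one_sandwich_eq_zero_iff:
  assumes X: "X \<in> carrier_mat n n" and Z: "Z \<in> carrier_mat n n" and C: "C \<in> carrier_mat n n"
    and U: "U \<in> carrier_mat n n" and V: "V \<in> carrier_mat n n" and VU: "V * U = 1\<^sub>m n"
    and Xe: "\<And>a b. a < n \<Longrightarrow> b < n \<Longrightarrow> X $$ (a,b) = U $$ (a,i) * V $$ (i,b)"
    and Ze: "\<And>a b. a < n \<Longrightarrow> b < n \<Longrightarrow> Z $$ (a,b) = U $$ (a,j) * V $$ (j,b)"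
    and i: "i < n" and j: "j < n"
  shows "X * C * Z = 0\<^sub>m n n \<longleftrightarrow> (V * C * U) $$ (i,j) = (0::'a::field)"
proof -
  note entry = rank_one_sandwich_entry[OF X Z C U V Xe Ze i j]
  obtain a b where "a < n" "b < n" "U $$ (a,i) \<noteq> 0" "V $$ (j,b) \<noteq> 0"
    using left_inverse_col_row_nonzero[OF U V VU] i j by metis
  then have "X * C * Z = 0\<^sub>m n n \<Longrightarrow> (V * C * U) $$ (i,j) = 0"
    using entry[of a b] by (metis index_zero_mat(1) mult_eq_0_iff)
  moreover have "(V * C * U) $$ (i,j) = 0 \<Longrightarrow> X * C * Z = 0\<^sub>m n n"
    using X C Z entry by (intro eq_matI) auto
  ultimately show ?thesis by blast
qed

lemma trace_rank_one_mult:
  assumes X: "X \<in> carrier_mat n n" and C: "C \<in> carrier_mat n n"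
    and U: "U \<in> carrier_mat n n" and V: "V \<in> carrier_mat n n"
    and Xe: "\<And>a b. a < n \<Longrightarrow> b < n \<Longrightarrow> X $$ (a,b) = U $$ (a,i) * V $$ (i,b)"
    and i: "i < n"
  shows "mtrace (X * C) = ((V * C * U) $$ (i,i) :: 'a::field)"
proof -
  have "mtrace (X * C) = (\<Sum>a<n. (X * C) $$ (a,a))" unfolding mtrace_def using X by simp
  also have "\<dots> = (\<Sum>a<n. \<Sum>m<n. U $$ (a,i) * V $$ (i,m) * C $$ (m,a))"
    by (rule sum.cong) (auto simp: mat_mult_entry[OF X C] Xe)
  also have "\<dots> = (\<Sum>a<n. (\<Sum>m<n. V $$ (i,m) * C $$ (m,a)) * U $$ (a,i))"
    by (simp add: sum_distrib_left sum_distrib_right ac_simps)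
  also have "\<dots> = (V * C * U) $$ (i,i)"
    using V C by (simp add: mat_mult_entry[OF _ U i i] mat_mult_entry[OF V C i])
  finally show ?thesis .
qed

lemma eigenvector_combination_apply:
  fixes A :: "'a::comm_semiring_0 mat"
  assumes A: "A \<in> carrier_mat n n"
    and ev: "\<And>j. j < m \<Longrightarrow> e j \<in> carrier_vec n \<and> A *\<^sub>v e j = th j \<cdot>\<^sub>v e j"
    and a: "a < n"
  shows "(\<Sum>b<n. A $$ (a,b) * (\<Sum>j<m. c j * e j $ b)) = (\<Sum>j<m. c j * th j * e j $ a)"
proof -
  have "(\<Sum>b<n. A $$ (a,b) * (\<Sum>j<m. c j * e j $ b)) = (\<Sum>b<n. \<Sum>j<m. c j * (A $$ (a,b) * e j $ b))"
    by (simp add: sum_distrib_left mult.left_commute)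
  also have "\<dots> = (\<Sum>j<m. c j * (\<Sum>b<n. A $$ (a,b) * e j $ b))"
    by (subst sum.swap) (simp add: sum_distrib_left)
  also have "\<dots> = (\<Sum>j<m. c j * th j * e j $ a)"
  proof (rule sum.cong)
    fix j assume "j \<in> {..<m}"
    then have ej: "e j \<in> carrier_vec n" and Aej: "A *\<^sub>v e j = th j \<cdot>\<^sub>v e j" using ev by auto
    have "(\<Sum>b<n. A $$ (a,b) * e j $ b) = (A *\<^sub>v e j) $ a"
      using mat_mult_vec_entry[OF A ej a] by simp
    also have "\<dots> = th j * e j $ a" using Aej ej a by simp
    finally show "c j * (\<Sum>b<n. A $$ (a,b) * e j $ b) = c j * th j * e j $ a"
      by (simp add: mult.assoc)
  qed simp
  finally show ?thesis .
qed

lemma eigenvector_combination_zero: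
  fixes A :: "'a::field mat" and m :: nat
  assumes A: "A \<in> carrier_mat n n"
    and ev: "\<And>j. j < m \<Longrightarrow> e j \<in> carrier_vec n \<and> e j \<noteq> 0\<^sub>v n \<and> A *\<^sub>v e j = th j \<cdot>\<^sub>v e j"
    and inj: "inj_on th {..<m}"
    and comb: "\<And>a. a < n \<Longrightarrow> (\<Sum>j<m. c j * e j $ a) = 0"
    and j: "j < m"
  shows "c j = 0"
  using ev inj comb j
proof (induction m arbitrary: c j)
  case (Suc m)
  have "(\<Sum>j<m. (c j * (th j - th m)) * e j $ a) = 0" if a: "a < n" for a
  proof -
    have "(\<Sum>j<Suc m. (c j * (th j - th m)) * e j $ a) =
        (\<Sum>j<Suc m. c j * th j * e j $ a) - th m * (\<Sum>j<Suc m. c j * e j $ a)"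
      by (simp add: sum_distrib_left sum_subtractf[symmetric] algebra_simps)
    also have "\<dots> = 0"
      using eigenvector_combination_apply[OF A _ a, of "Suc m" e th c] Suc.prems(1,3) a by simp
    finally show ?thesis by simp
  qed
  moreover have "inj_on th {..<m}" using Suc.prems(2) by (rule inj_on_subset) auto
  moreover have "th j \<noteq> th m" if "j < m" for j
    using Suc.prems(2) that unfolding inj_on_def by auto
  ultimately have lower: "c j = 0" if "j < m" for j
    using Suc.IH[of "\<lambda>j. c j * (th j - th m)" j] Suc.prems(1) that by auto
  obtain a where "a < n" "e m $ a \<noteq> 0"
    using Suc.prems(1)[of m] by (metis eq_vecI carrier_vecD index_zero_vec lessI)
  moreover have "c m * e m $ a = 0" if "a < n" for a
    using Suc.prems(3)[OF that] lower by simp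
  ultimately have "c m = 0" by auto
  with lower show ?case using Suc.prems(4) less_Suc_eq by blast
qed simp

lemma det_eigenvector_mat_nonzero:
  fixes A :: "'a::field mat"
  assumes A: "A \<in> carrier_mat n n"
    and ev: "\<And>j. j < n \<Longrightarrow> e j \<in> carrier_vec n \<and> e j \<noteq> 0\<^sub>v n \<and> A *\<^sub>v e j = th j \<cdot>\<^sub>v e j"
    and inj: "inj_on th {..<n}"
  shows "det (mat n n (\<lambda>(a,j). e j $ a)) \<noteq> 0"
proof
  let ?M = "mat n n (\<lambda>(a,j). e j $ a)"
  assume "det ?M = 0"
  then obtain v where v: "v \<in> carrier_vec n" "v \<noteq> 0\<^sub>v n" "?M *\<^sub>v v = 0\<^sub>v n"
    using det_0_iff_vec_prod_zero_field[of ?M n] by auto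
  have "(\<Sum>j<n. v $ j * e j $ a) = 0" if a: "a < n" for a
  proof -
    have "(\<Sum>j<n. v $ j * e j $ a) = (?M *\<^sub>v v) $ a"
      using mat_mult_vec_entry[OF _ v(1) a, of ?M] a by (simp add: ac_simps)
    then show ?thesis using v(3) a by simp
  qed
  then have "v $ j = 0" if "j < n" for j
    using eigenvector_combination_zero[OF A ev inj, where c = "\<lambda>j. v $ j"] that by blast
  then have "v = 0\<^sub>v n" using v(1) by (intro eq_vecI) auto
  with v(2) show False by simp
qed

lemma eigenvector_mat_mult:
  fixes A :: "'a::comm_ring_1 mat"
  assumes A: "A \<in> carrier_mat n n"
    and ev: "\<And>j. j < n \<Longrightarrow> e j \<in> carrier_vec n \<and> A *\<^sub>v e j = th j \<cdot>\<^sub>v e j"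
  shows "A * mat n n (\<lambda>(a,j). e j $ a) = mat n n (\<lambda>(a,j). e j $ a) * mat_diag n th"
    (is "A * ?M = ?M * _")
proof (rule eq_matI)
  have M: "?M \<in> carrier_mat n n" by simp
  fix a j assume "a < dim_row (?M * mat_diag n th)" "j < dim_col (?M * mat_diag n th)"
  then have a: "a < n" and j: "j < n" by (auto simp: mat_diag_def)
  have "col ?M j = e j" using ev[OF j] j by (intro eq_vecI) auto
  then have "(A * ?M) $$ (a,j) = (A *\<^sub>v e j) $ a" using A a j by simp
  also have "\<dots> = ?M $$ (a,j) * th j" using ev[OF j] a j by (auto simp: mult.commute)
  also have "\<dots> = (?M * mat_diag n th) $$ (a,j)" using a j by (simp add: mat_diag_mult_right[OF M])
  finally show "(A * ?M) $$ (a,j) = (?M * mat_diag n th) $$ (a,j)" .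
qed (use A in \<open>auto simp: mat_diag_def\<close>)

lemma inverse_conjugate:
  fixes A :: "'a::semiring_1 mat"
  assumes A: "A \<in> carrier_mat n n" and M: "M \<in> carrier_mat n n" and Mi: "Mi \<in> carrier_mat n n"
    and D: "D \<in> carrier_mat n n"
    and MMi: "M * Mi = 1\<^sub>m n" and MiM: "Mi * M = 1\<^sub>m n" and AM: "A * M = M * D"
  shows "Mi * A = D * Mi"
proof -
  have "Mi * A = Mi * (A * (M * Mi))" using right_mult_one_mat[OF A] by (simp add: MMi)
  also have "\<dots> = Mi * (A * M) * Mi"
    using assoc_mult_mat[OF Mi mult_carrier_mat[OF A M] Mi] assoc_mult_mat[OF A M Mi] by simp
  also have "\<dots> = (Mi * M) * D * Mi" using assoc_mult_mat[OF Mi M D] by (simp add: AM)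
  finally show ?thesis using MiM left_mult_one_mat[OF D] by simp
qed

section \<open>The normalizing basis and the eigenbasis\<close>

lemma orth_idempotents_basis_entry:
  assumes orth: "orth_idempotents d Es"
    and P: "P \<in> carrier_mat (d+1) (d+1)" and Q: "Q \<in> carrier_mat (d+1) (d+1)"
    and PQ: "P * Q = 1\<^sub>m (d+1)"
    and cols: "\<And>i. i \<le> d \<Longrightarrow> Es i *\<^sub>v col P i = col P i"
    and i: "i \<le> d" and a: "a < d+1" and b: "b < d+1"
  shows "Es i $$ (a,b) = P $$ (a,i) * Q $$ (i,b)"
proof (rule basis_projection_entry[OF _ P Q PQ _ _ a b])
  have Es: "Es j \<in> carrier_mat (d+1) (d+1)" if "j \<le> d" for j
    using orth that unfolding orth_idempotents_def by blast
  show "Es i \<in> carrier_mat (d+1) (d+1)" "i < d+1" using Es[OF i] i by auto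
  fix j assume "j < d+1"
  then have j: "j \<le> d" by simp
  have cP: "col P j \<in> carrier_vec (d+1)" by (metis P carrier_matD(1) col_dim)
  have "Es i *\<^sub>v col P j = (Es i * Es j) *\<^sub>v col P j"
    using cols[OF j] Es[OF i] Es[OF j] cP by (metis assoc_mult_mat_vec)
  also have "\<dots> = (if j = i then col P i else 0\<^sub>v (d+1))"
    using orth i j cols[OF i] cP unfolding orth_idempotents_def by auto
  finally show "Es i *\<^sub>v col P j = (if j = i then col P i else 0\<^sub>v (d+1))" .
qed

text \<open>The diagonal of \<open>Y\<close> vanishes because \<open>Y\<^sub>i\<^sub>i = tr (E\<^sup>*\<^sub>i A)\<close>.\<close>
lemma normalizing_basis_tridiagonal:
  assumes d: "1 \<le> d" and orth: "orth_idempotents d Es" and A: "A \<in> carrier_mat (d+1) (d+1)"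
    and far: "\<forall>i\<le>d. \<forall>j\<le>d. (i > j + 1 \<or> j > i + 1) \<longrightarrow> Es i * A * Es j = 0\<^sub>m (d+1) (d+1)"
    and near: "\<forall>i\<le>d. \<forall>j\<le>d. (i = j + 1 \<or> j = i + 1) \<longrightarrow> Es i * A * Es j \<noteq> 0\<^sub>m (d+1) (d+1)"
    and bip: "bipartite d Es A" and norm: "normalizing d Es A \<theta>"
  obtains P Q Y where "P \<in> carrier_mat (d+1) (d+1)" "Q \<in> carrier_mat (d+1) (d+1)"
    "Y \<in> carrier_mat (d+1) (d+1)" "P * Q = 1\<^sub>m (d+1)" "Q * P = 1\<^sub>m (d+1)" "A * P = P * Y"
    "\<And>i a b. i \<le> d \<Longrightarrow> a < d+1 \<Longrightarrow> b < d+1 \<Longrightarrow> Es i $$ (a,b) = P $$ (a,i) * Q $$ (i,b)"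
    "normalized_tridiagonal d (\<lambda>i j. Y $$ (i,j)) \<theta>"
proof -
  obtain P Y where P: "P \<in> carrier_mat (d+1) (d+1)" and Y: "Y \<in> carrier_mat (d+1) (d+1)"
    and detP: "det P \<noteq> 0" and cols: "\<And>i. i \<le> d \<Longrightarrow> Es i *\<^sub>v col P i = col P i"
    and AP: "A * P = P * Y" and rows: "\<And>i. i \<le> d \<Longrightarrow> (\<Sum>j\<le>d. Y $$ (i,j)) = \<theta>"
    using norm unfolding normalizing_def by blast
  obtain Q where Q: "Q \<in> carrier_mat (d+1) (d+1)" and PQ: "P * Q = 1\<^sub>m (d+1)"
    and QP: "Q * P = 1\<^sub>m (d+1)"
    using obtain_inverse_mat[OF P detP] by blast
  have QAP: "Q * A * P = Y"
    using Q A P Y by (simp add: AP QP assoc_mult_mat[OF Q A P] assoc_mult_mat[OF Q P Y, symmetric])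
  have Es: "Es i \<in> carrier_mat (d+1) (d+1)" if "i \<le> d" for i
    using orth that unfolding orth_idempotents_def by blast
  note Es_entry = orth_idempotents_basis_entry[OF orth P Q PQ cols]
  have zero_iff: "Es i * A * Es j = 0\<^sub>m (d+1) (d+1) \<longleftrightarrow> Y $$ (i,j) = 0" if "i \<le> d" "j \<le> d" for i j
    using rank_one_sandwich_eq_zero_iff[OF Es[of i] Es[of j] A P Q QP] that Es_entry QAP by simp
  have diag: "Y $$ (i,i) = 0" if "i \<le> d" for i
    using bip trace_rank_one_mult[OF Es A P Q] that Es_entry QAP unfolding bipartite_def by simp
  have "normalized_tridiagonal d (\<lambda>i j. Y $$ (i,j)) \<theta>"
  proof unfold_locales
    fix i j assume ij: "i \<le> d" "j \<le> d" "j \<noteq> i + 1" "i \<noteq> j + 1"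
    show "Y $$ (i,j) = 0"
    proof (cases "i = j")
      case False
      with ij have "i > j + 1 \<or> j > i + 1" by arith
      then show ?thesis using far zero_iff ij by auto
    qed (use diag ij in simp)
  next
    fix i assume "i < d"
    then show "Y $$ (i, Suc i) \<noteq> 0 \<and> Y $$ (Suc i, i) \<noteq> 0"
      using near[rule_format, of i "Suc i"] near[rule_format, of "Suc i" i]
        zero_iff[of i "Suc i"] zero_iff[of "Suc i" i] by simp
  qed (use d rows in auto)
  then show thesis using that P Q Y PQ QP AP Es_entry by blast
qed

lemma primitive_idempotents_eigenbasis:
  assumes A: "A \<in> carrier_mat (d+1) (d+1)" and prim: "primitive_idempotents d A th E"
  obtains M Mi where "M \<in> carrier_mat (d+1) (d+1)" "Mi \<in> carrier_mat (d+1) (d+1)"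
    "M * Mi = 1\<^sub>m (d+1)" "Mi * M = 1\<^sub>m (d+1)" "Mi * A = mat_diag (d+1) th * Mi"
    "\<And>i. i \<le> d \<Longrightarrow> E i \<in> carrier_mat (d+1) (d+1)"
    "\<And>i a b. i \<le> d \<Longrightarrow> a < d+1 \<Longrightarrow> b < d+1 \<Longrightarrow> E i $$ (a,b) = M $$ (a,i) * Mi $$ (i,b)"
    "inj_on E {..d}"
proof -
  have inj: "inj_on th {..<d+1}" and E: "\<And>i. i \<le> d \<Longrightarrow> E i \<in> carrier_mat (d+1) (d+1)"
    and E_act: "\<And>i j v. i \<le> d \<Longrightarrow> j \<le> d \<Longrightarrow> v \<in> carrier_vec (d+1) \<Longrightarrow>
         A *\<^sub>v v = th j \<cdot>\<^sub>v v \<Longrightarrow> E i *\<^sub>v v = (if i = j then v else 0\<^sub>v (d+1))"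
    using prim unfolding primitive_idempotents_def by (auto simp: lessThan_Suc_atMost)
  obtain e where "\<And>j. j \<le> d \<Longrightarrow> eigenvector A (e j) (th j)"
    using prim unfolding primitive_idempotents_def eigenvalue_def by metis
  then have ev: "\<And>j. j < d+1 \<Longrightarrow>
      e j \<in> carrier_vec (d+1) \<and> e j \<noteq> 0\<^sub>v (d+1) \<and> A *\<^sub>v e j = th j \<cdot>\<^sub>v e j"
    using A unfolding eigenvector_def by auto
  define M where "M = mat (d+1) (d+1) (\<lambda>(a,j). e j $ a)"
  have M: "M \<in> carrier_mat (d+1) (d+1)" unfolding M_def by simp
  have col_M: "col M j = e j" if "j < d+1" for j
    using ev[OF that] that unfolding M_def by (intro eq_vecI) auto
  obtain Mi where Mi: "Mi \<in> carrier_mat (d+1) (d+1)" and MMi: "M * Mi = 1\<^sub>m (d+1)"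
    and MiM: "Mi * M = 1\<^sub>m (d+1)"
    using obtain_inverse_mat[OF M det_eigenvector_mat_nonzero[OF A ev inj, folded M_def]] by blast
  have "A * M = M * mat_diag (d+1) th"
    unfolding M_def by (rule eigenvector_mat_mult[OF A]) (use ev in auto)
  then have "Mi * A = mat_diag (d+1) th * Mi"
    by (rule inverse_conjugate[OF A M Mi mat_diag_dim MMi MiM])
  moreover have "E i $$ (a,b) = M $$ (a,i) * Mi $$ (i,b)"
    if "i \<le> d" "a < d+1" "b < d+1" for i a b
  proof (rule basis_projection_entry[OF E M Mi MMi])
    fix j assume "j < d+1"
    then show "E i *\<^sub>v col M j = (if j = i then col M i else 0\<^sub>v (d+1))"
      using E_act[of i j "e j"] ev[of j] col_M[of j] col_M[of i] that by simp
  qed (use that in simp_all)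
  moreover have "inj_on E {..d}"
  proof (rule inj_onI)
    fix p q assume p: "p \<in> {..d}" and q: "q \<in> {..d}" and Epq: "E p = E q"
    show "p = q"
    proof (rule ccontr)
      assume "p \<noteq> q"
      then have "E q *\<^sub>v e p = 0\<^sub>v (d+1)" using E_act[of q p "e p"] ev[of p] p q by simp
      moreover have "E p *\<^sub>v e p = e p" using E_act[of p p "e p"] ev[of p] p by simp
      ultimately show False using ev[of p] p Epq by simp
    qed
  qed
  ultimately show thesis using that M Mi MMi MiM E by blast
qed

lemma dual_op_mult_basis:
  assumes P: "P \<in> carrier_mat (d+1) (d+1)" and Q: "Q \<in> carrier_mat (d+1) (d+1)"
    and QP: "Q * P = 1\<^sub>m (d+1)"
    and Es_entry: "\<And>i a b. i \<le> d \<Longrightarrow> a < d+1 \<Longrightarrow> b < d+1 \<Longrightarrow>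
      Es i $$ (a,b) = P $$ (a,i) * Q $$ (i,b)"
  shows "dual_op d ths Es * P = P * mat_diag (d+1) ths"
proof -
  have PD: "P * mat_diag (d+1) ths \<in> carrier_mat (d+1) (d+1)" using P by simp
  have "dual_op d ths Es = P * mat_diag (d+1) ths * Q"
  proof (rule eq_matI)
    fix a b
    assume "a < dim_row (P * mat_diag (d+1) ths * Q)" "b < dim_col (P * mat_diag (d+1) ths * Q)"
    then have a: "a < d+1" and b: "b < d+1" using P Q by auto
    have "(P * mat_diag (d+1) ths * Q) $$ (a,b) =
        (\<Sum>i<d+1. (P * mat_diag (d+1) ths) $$ (a,i) * Q $$ (i,b))"
      by (rule mat_mult_entry[OF PD Q a b])
    also have "\<dots> = (\<Sum>i<d+1. P $$ (a,i) * ths i * Q $$ (i,b))"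
      by (rule sum.cong) (use a in \<open>simp_all add: mat_diag_mult_right[OF P, simplified]\<close>)
    also have "\<dots> = (\<Sum>i\<le>d. P $$ (a,i) * ths i * Q $$ (i,b))"
      by (simp add: lessThan_Suc_atMost)
    also have "\<dots> = (\<Sum>i\<le>d. ths i * Es i $$ (a,b))"
      by (rule sum.cong) (simp_all add: Es_entry[OF _ a b])
    finally show "dual_op d ths Es $$ (a,b) = (P * mat_diag (d+1) ths * Q) $$ (a,b)"
      unfolding dual_op_def using a b by simp
  qed (use P Q in \<open>auto simp: dual_op_def\<close>)
  then show ?thesis using assoc_mult_mat[OF PD Q P] QP right_mult_one_mat[OF PD] by simp
qed

lemma Delta_adj_iff_entry:
  assumes As: "As \<in> carrier_mat (d+1) (d+1)"
    and M: "M \<in> carrier_mat (d+1) (d+1)" and Mi: "Mi \<in> carrier_mat (d+1) (d+1)"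
    and MiM: "Mi * M = 1\<^sub>m (d+1)"
    and E: "\<And>i. i \<le> d \<Longrightarrow> E i \<in> carrier_mat (d+1) (d+1)"
    and E_entry: "\<And>i a b. i \<le> d \<Longrightarrow> a < d+1 \<Longrightarrow> b < d+1 \<Longrightarrow> E i $$ (a,b) = M $$ (a,i) * Mi $$ (i,b)"
    and inj: "inj_on E {..d}"
    and i: "i \<le> d" and j: "j \<le> d" and ij: "i \<noteq> j"
  shows "Delta_adj d E As i j \<longleftrightarrow> (Mi * As * M) $$ (i,j) \<noteq> 0"
proof -
  have "E i \<noteq> E j" using inj i j ij unfolding inj_on_def by blast
  moreover have "E i * As * E j = 0\<^sub>m (d+1) (d+1) \<longleftrightarrow> (Mi * As * M) $$ (i,j) = 0"
    by (rule rank_one_sandwich_eq_zero_iff[OF E[OF i] E[OF j] As M Mi MiM])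
      (use i j E_entry[OF i] E_entry[OF j] in simp_all)
  ultimately show ?thesis using i j unfolding Delta_adj_def by blast
qed

lemma tail_non_adjacent:
  assumes d: "3 \<le> d" and inj: "inj_on E {..d}"
    and tail: "is_tail d E As 0 1" and adj12: "Delta_adj d E As 1 2"
  shows "2 \<le> j \<Longrightarrow> j \<le> d \<Longrightarrow> \<not> Delta_adj d E As 0 j"
    and "3 \<le> j \<Longrightarrow> j \<le> d \<Longrightarrow> \<not> Delta_adj d E As 1 j"
proof -
  have E_ne: "E p \<noteq> E q" if "p \<le> d" "q \<le> d" "p \<noteq> q" for p q
    using inj that unfolding inj_on_def by blast
  show "\<not> Delta_adj d E As 0 j" if "2 \<le> j" "j \<le> d"
  proof
    assume "Delta_adj d E As 0 j"
    then have "E j = E 1" using tail \<open>j \<le> d\<close> unfolding is_tail_def by blast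
    with E_ne[of j 1] that show False by simp
  qed
  show "\<not> Delta_adj d E As 1 j" if "3 \<le> j" "j \<le> d"
  proof
    assume adj1j: "Delta_adj d E As 1 j"
    have "\<forall>j\<le>d. \<forall>k\<le>d. Delta_adj d E As 1 j \<and> E j \<noteq> E 0 \<and> Delta_adj d E As 1 k \<and> E k \<noteq> E 0
        \<longrightarrow> E j = E k"
      using tail unfolding is_tail_def by blast
    moreover have "E j \<noteq> E 0" "E 2 \<noteq> E 0" "2 \<le> d" using E_ne[of j 0] E_ne[of 2 0] that d by auto
    ultimately have "E j = E 2" using adj1j adj12 \<open>j \<le> d\<close> by blast
    with E_ne[of j 2] that d show False by simp
  qed
qed

text \<open>\<open>R\<close> is the change of basis from the normalizing basis to an eigenbasis of \<open>A\<close>, and \<open>B\<close> is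
  the matrix of \<open>A\<^sup>*\<close> in that eigenbasis.\<close>
lemma tail_identity_matrix:
  assumes d: "3 \<le> d"
    and tri: "normalized_tridiagonal d (\<lambda>i j. Y $$ (i,j)) (th 0)"
    and Y: "Y \<in> carrier_mat (d+1) (d+1)" and R: "R \<in> carrier_mat (d+1) (d+1)"
    and B: "B \<in> carrier_mat (d+1) (d+1)" and S: "S \<in> carrier_mat (d+1) (d+1)"
    and RS: "R * S = 1\<^sub>m (d+1)"
    and RY: "mat_diag (d+1) th * R = R * Y"
    and BR: "B * R = R * mat_diag (d+1) ths"
    and B0: "\<And>j. 2 \<le> j \<Longrightarrow> j \<le> d \<Longrightarrow> B $$ (0,j) = 0"
    and B1: "\<And>j. 3 \<le> j \<Longrightarrow> j \<le> d \<Longrightarrow> B $$ (1,j) = 0"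
    and inj: "inj_on ths {..d}"
  shows "th 1 * (ths (d-1) - ths 3) = th 2 * (ths d - ths 2)"
proof -
  have left: "(\<Sum>l\<le>d. R $$ (j,l) * Y $$ (l,m)) = th j * R $$ (j,m)" if "j \<le> d" "m \<le> d" for j m
  proof -
    have "(\<Sum>l\<le>d. R $$ (j,l) * Y $$ (l,m)) = (R * Y) $$ (j,m)"
      using mat_mult_entry[OF R Y, of j m] that by (simp add: lessThan_Suc_atMost)
    then show ?thesis using that by (simp add: RY[symmetric] mat_diag_mult_left[OF R, simplified])
  qed
  have dual: "(\<Sum>l\<le>d. B $$ (i,l) * R $$ (l,m)) = R $$ (i,m) * ths m" if "i \<le> d" "m \<le> d" for i m
  proof -
    have "(\<Sum>l\<le>d. B $$ (i,l) * R $$ (l,m)) = (B * R) $$ (i,m)"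
      using mat_mult_entry[OF B R, of i m] that by (simp add: lessThan_Suc_atMost)
    then show ?thesis using that by (simp add: BR mat_diag_mult_right[OF R, simplified])
  qed
  have dual0: "R $$ (0,m) * ths m = B $$ (0,0) * R $$ (0,m) + B $$ (0,1) * R $$ (1,m)"
    if "m \<le> d" for m
    using dual[OF _ that, of 0] sum_atMost_two_support[of 0 d 1 "\<lambda>l. B $$ (0,l) * R $$ (l,m)"] B0 d
    by simp
  have dual1: "R $$ (1,m) * ths m =
      B $$ (1,0) * R $$ (0,m) + B $$ (1,1) * R $$ (1,m) + B $$ (1,2) * R $$ (2,m)"
    if "m \<le> d" for m
  proof -
    have "(\<Sum>l\<le>d. B $$ (1,l) * R $$ (l,m)) = (\<Sum>l\<in>{0,1,2}. B $$ (1,l) * R $$ (l,m))"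
      by (rule sum.mono_neutral_right) (use d B1 in auto)
    then show ?thesis using dual[OF _ that, of 1] d by (simp add: ac_simps)
  qed
  have "\<exists>m\<le>d. R $$ (0,m) \<noteq> 0"
    using left_inverse_col_row_nonzero(2)[OF S R RS] by (simp add: less_Suc_eq_le)
  then interpret tridiagonal_stationary d "\<lambda>i j. Y $$ (i,j)" "th 0" "\<lambda>m. R $$ (0,m)"
    by (intro tridiagonal_stationary.intro tridiagonal_stationary_axioms.intro tri)
      (use left[of 0] in auto)
  show ?thesis by (rule tail_identity[OF d left left dual0 dual1 inj]) (use d in auto)
qed

theorem lemma11p1:
  fixes d :: nat and Es E :: "nat \<Rightarrow> 'a::field mat" and A :: "'a mat"
    and th ths :: "nat \<Rightarrow> 'a"
  assumes "d \<ge> 3"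
    and "orth_idempotents d Es"
    and "A \<in> carrier_mat (d+1) (d+1)"
    and "\<forall>i\<le>d. \<forall>j\<le>d. (i > j + 1 \<or> j > i + 1) \<longrightarrow> Es i * A * Es j = 0\<^sub>m (d+1) (d+1)"
    and "\<forall>i\<le>d. \<forall>j\<le>d. (i = j + 1 \<or> j = i + 1) \<longrightarrow> Es i * A * Es j \<noteq> 0\<^sub>m (d+1) (d+1)"
    and "primitive_idempotents d A th E"
    and "bipartite d Es A"
    and "inj_on ths {..d}"
    and "normalizing d Es A (th 0)"
    and "is_tail d E (dual_op d ths Es) 0 1"
    and "Delta_adj d E (dual_op d ths Es) 1 2"
  shows "th 1 * (ths (d-1) - ths 3) = th 2 * (ths d - ths 2)"
proof -
  let ?n = "d+1" and ?As = "dual_op d ths Es"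
  obtain P Q Y where P: "P \<in> carrier_mat ?n ?n" and Q: "Q \<in> carrier_mat ?n ?n"
    and Y: "Y \<in> carrier_mat ?n ?n" and PQ: "P * Q = 1\<^sub>m ?n" and QP: "Q * P = 1\<^sub>m ?n"
    and AP: "A * P = P * Y"
    and Es_entry: "\<And>i a b. i \<le> d \<Longrightarrow> a < ?n \<Longrightarrow> b < ?n \<Longrightarrow>
      Es i $$ (a,b) = P $$ (a,i) * Q $$ (i,b)"
    and tri: "normalized_tridiagonal d (\<lambda>i j. Y $$ (i,j)) (th 0)"
    by (rule normalizing_basis_tridiagonal[OF _ assms(2-5,7,9)]) (use assms(1) in auto)
  obtain M Mi where M: "M \<in> carrier_mat ?n ?n" and Mi: "Mi \<in> carrier_mat ?n ?n"
    and MMi: "M * Mi = 1\<^sub>m ?n" and MiM: "Mi * M = 1\<^sub>m ?n" and MiA: "Mi * A = mat_diag ?n th * Mi"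
    and E: "\<And>i. i \<le> d \<Longrightarrow> E i \<in> carrier_mat ?n ?n"
    and E_entry: "\<And>i a b. i \<le> d \<Longrightarrow> a < ?n \<Longrightarrow> b < ?n \<Longrightarrow>
      E i $$ (a,b) = M $$ (a,i) * Mi $$ (i,b)"
    and E_inj: "inj_on E {..d}"
    by (rule primitive_idempotents_eigenbasis[OF assms(3,6)]) blast
  have As: "?As \<in> carrier_mat ?n ?n" by (simp add: dual_op_def)
  define B where "B = Mi * ?As * M"
  have B: "B \<in> carrier_mat ?n ?n" unfolding B_def using Mi As M by simp
  have MiAs: "Mi * ?As \<in> carrier_mat ?n ?n" using Mi As by simp
  have BMi: "B * Mi = Mi * ?As"
    unfolding B_def using assoc_mult_mat[OF MiAs M Mi] MMi right_mult_one_mat[OF MiAs] by simp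
  note intertwine = mult_intertwining[OF _ Mi _ P]
  show ?thesis
  proof (rule tail_identity_matrix[of d Y th "Mi * P" B "Q * M" ths])
    show "mat_diag ?n th * (Mi * P) = Mi * P * Y"
      by (rule intertwine) (use assms(3) Y MiA AP in auto)
    show "B * (Mi * P) = Mi * P * mat_diag ?n ths"
      by (rule intertwine) (use B As dual_op_mult_basis[OF P Q QP Es_entry] BMi in auto)
    show "Mi * P * (Q * M) = 1\<^sub>m ?n"
      using assoc_mult_mat[OF Mi P mult_carrier_mat[OF Q M]] assoc_mult_mat[OF P Q M] PQ MiM
        left_mult_one_mat[OF M] by simp
    have B_zero_iff: "B $$ (i,j) = 0 \<longleftrightarrow> \<not> Delta_adj d E ?As i j"
      if "i \<le> d" "j \<le> d" "i \<noteq> j" for i j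
      using Delta_adj_iff_entry[OF As M Mi MiM E E_entry E_inj that] unfolding B_def by blast
    show "B $$ (0,j) = 0" if "2 \<le> j" "j \<le> d" for j
      using tail_non_adjacent(1)[OF assms(1) E_inj assms(10,11) that] that B_zero_iff by simp
    show "B $$ (1,j) = 0" if "3 \<le> j" "j \<le> d" for j
      using tail_non_adjacent(2)[OF assms(1) E_inj assms(10,11) that] that B_zero_iff by simp
  qed (use assms(1,8) tri Y B Mi P Q M in auto)
qed

end
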